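(* Let $K_1,K_2$ be simplicial complexes on $[m]$, $W=K_1\cap K_2$, and let $Z\subset W$ with $\varnothing\notin Z$ and $O_{K_1\cup K_2}(Z)\subset W$, so that the connected sum $K_1\#^ZK_2=\operatorname{Del}_Z(K_1\cup K_2)$ is defined. Let $\mathcal J_Z\subset\mathbb Z[W]$ be the ideal generated by $x_\sigma$, $\sigma\in Z$, and let $\iota_i:\mathcal J_Z\to\mathbb Z[K_i]$ ($i=1,2$) be the module maps obtained by identifying $\mathcal J_Z$ with the ideal $\mathcal I_Z\subset\mathbb Z[K_1\cup K_2]$ generated by $x_\sigma$, $\sigma\in Z$ (via $x_\sigma\mapsto x_\sigma$) followed by the quotient map $\mathbb Z[K_1\cup K_2]\to\mathbb Z[K_i]$. Then there is a natural ring isomorphism $$\mathbb Z[K_1]\,\#_{\mathbb Z[W]}^{\mathcal J_Z}\,\mathbb Z[K_2]\cong\mathbb Z[K_1\#^ZK_2],$$ where the left side is the connected sum of the diagram $\mathcal J_Z\to\mathbb Z[K_i]\to\mathbb Z[W]$ (with the natural quotient maps $\mathbb Z[K_i]\to\mathbb Z[W]$); explicitly, $$\mathbb Z[K_1\#^ZK_2]\cong\frac{\{(a,b)\in\mathbb Z[K_1]\oplus\mathbb Z[K_2]:\mathsf g_1(a)=\mathsf g_2(b)\}}{\{(\iota_1(v),\iota_2(v)):v\in\mathcal J_Z\}}.$$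
   Context: Stanley–Reisner ring: $\mathbb Z[K]=\mathbb Z[x_1,\dots,x_m]/\langle x_\sigma:\sigma\notin K\rangle$, $x_\sigma=\prod_{i\in\sigma}x_i$; for a subcomplex $L\subset K$ there is a natural quotient map $\mathbb Z[K]\to\mathbb Z[L]$, and $\mathsf g_i:\mathbb Z[K_i]\to\mathbb Z[W]$ denote these. Simplicial-complex notation: $O_K(Z)=\{\sigma\in K:\sigma\supseteq\tau$ for some $\tau\in Z\}$, $\operatorname{Del}_Z(K)=K\setminus O_K(Z)$. Connected sum of rings: given ring maps $\epsilon_A:A\to C$, $\epsilon_B:B\to C$, a $C$-module $V$ and module maps $\iota_A:V\to A$, $\iota_B:V\to B$ with $\epsilon_A\iota_A=\epsilon_B\iota_B$, $A\#_C^VB:=(A\times_CB)/\{(\iota_A(v),\iota_B(v)):v\in V\}$ where $A\times_CB=\{(a,b):\epsilon_A(a)=\epsilon_B(b)\}$. *)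

theory Defs
  imports "HOL-Library.Poly_Mapping" "HOL-Algebra.QuotRing"
begin

type_synonym zpoly = "(nat \<Rightarrow>\<^sub>0 nat) \<Rightarrow>\<^sub>0 int"

definition var :: "nat \<Rightarrow> zpoly" where
  "var i = Poly_Mapping.single (Poly_Mapping.single i 1) 1"

definition xs :: "nat set \<Rightarrow> zpoly" where
  "xs \<sigma> = (\<Prod>i\<in>\<sigma>. var i)"

definition Pring :: "nat \<Rightarrow> zpoly ring" where
  "Pring m = \<lparr>carrier = {p. \<forall>\<mu>\<in>Poly_Mapping.keys (p::zpoly). Poly_Mapping.keys (\<mu> :: nat \<Rightarrow>\<^sub>0 nat) \<subseteq> {1..m}},
              mult = (*), one = 1, zero = 0, add = (+)\<rparr>"

definition simplicial_complex :: "nat \<Rightarrow> nat set set \<Rightarrow> bool" where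
  "simplicial_complex m K \<longleftrightarrow> {} \<in> K \<and> (\<forall>\<sigma>\<in>K. \<sigma> \<subseteq> {1..m}) \<and>
     (\<forall>\<sigma>\<in>K. \<forall>\<tau>. \<tau> \<subseteq> \<sigma> \<longrightarrow> \<tau> \<in> K)"

definition Ostar :: "nat set set \<Rightarrow> nat set set \<Rightarrow> nat set set" where
  "Ostar K Z = {\<sigma>\<in>K. \<exists>\<tau>\<in>Z. \<tau> \<subseteq> \<sigma>}"

definition Del :: "nat set set \<Rightarrow> nat set set \<Rightarrow> nat set set" where
  "Del Z K = K - Ostar K Z"

definition SR_ideal :: "nat \<Rightarrow> nat set set \<Rightarrow> zpoly set" where
  "SR_ideal m K = genideal (Pring m) {xs \<sigma> | \<sigma>. \<sigma> \<subseteq> {1..m} \<and> \<sigma> \<notin> K}"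

definition SR :: "nat \<Rightarrow> nat set set \<Rightarrow> zpoly set ring" where
  "SR m K = Pring m Quot SR_ideal m K"

definition SR_proj :: "nat \<Rightarrow> nat set set \<Rightarrow> zpoly \<Rightarrow> zpoly set" where
  "SR_proj m K p = SR_ideal m K +>\<^bsub>Pring m\<^esub> p"

(* natural quotient map Z[K] -> Z[L] for a subcomplex L of K *)
definition SR_map :: "nat \<Rightarrow> nat set set \<Rightarrow> zpoly set \<Rightarrow> zpoly set" where
  "SR_map m L C = SR_proj m L (SOME p. p \<in> C)"

definition fiber_prod ::
  "('a,'c) ring_scheme \<Rightarrow> ('b,'d) ring_scheme \<Rightarrow> ('a \<Rightarrow> 'e) \<Rightarrow> ('b \<Rightarrow> 'e) \<Rightarrow> ('a \<times> 'b) ring" where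
  "fiber_prod A B eA eB =
     \<lparr>carrier = {(a, b). a \<in> carrier A \<and> b \<in> carrier B \<and> eA a = eB b},
      mult = (\<lambda>x y. (fst x \<otimes>\<^bsub>A\<^esub> fst y, snd x \<otimes>\<^bsub>B\<^esub> snd y)),
      one = (\<one>\<^bsub>A\<^esub>, \<one>\<^bsub>B\<^esub>),
      zero = (\<zero>\<^bsub>A\<^esub>, \<zero>\<^bsub>B\<^esub>),
      add = (\<lambda>x y. (fst x \<oplus>\<^bsub>A\<^esub> fst y, snd x \<oplus>\<^bsub>B\<^esub> snd y))\<rparr>"

definition csum_rel :: "'v set \<Rightarrow> ('v \<Rightarrow> 'a) \<Rightarrow> ('v \<Rightarrow> 'b) \<Rightarrow> ('a \<times> 'b) set" where
  "csum_rel V iA iB = {(iA v, iB v) | v. v \<in> V}"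

definition conn_sum ::
  "('a,'c) ring_scheme \<Rightarrow> ('b,'d) ring_scheme \<Rightarrow> ('a \<Rightarrow> 'e) \<Rightarrow> ('b \<Rightarrow> 'e) \<Rightarrow>
   'v set \<Rightarrow> ('v \<Rightarrow> 'a) \<Rightarrow> ('v \<Rightarrow> 'b) \<Rightarrow> ('a \<times> 'b) set ring" where
  "conn_sum A B eA eB V iA iB = fiber_prod A B eA eB Quot csum_rel V iA iB"

definition conn_sum_class ::
  "('a,'c) ring_scheme \<Rightarrow> ('b,'d) ring_scheme \<Rightarrow> ('a \<Rightarrow> 'e) \<Rightarrow> ('b \<Rightarrow> 'e) \<Rightarrow>
   'v set \<Rightarrow> ('v \<Rightarrow> 'a) \<Rightarrow> ('v \<Rightarrow> 'b) \<Rightarrow> 'a \<times> 'b \<Rightarrow> ('a \<times> 'b) set" where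
  "conn_sum_class A B eA eB V iA iB x = csum_rel V iA iB +>\<^bsub>fiber_prod A B eA eB\<^esub> x"

definition SR_genideal :: "nat \<Rightarrow> nat set set \<Rightarrow> nat set set \<Rightarrow> zpoly set set" where
  "SR_genideal m K Z = genideal (SR m K) {SR_proj m K (xs \<sigma>) | \<sigma>. \<sigma> \<in> Z}"

(* iota_i : J_Z -> Z[K_i]: identify v \<in> J_Z \<subseteq> Z[W] with the unique u \<in> I_Z \<subseteq> Z[K1 \<union> K2]
   mapping to v, then project to Z[K_i] *)
definition iota :: "nat \<Rightarrow> nat set set \<Rightarrow> nat set set \<Rightarrow> nat set set \<Rightarrow> nat set set
                    \<Rightarrow> zpoly set \<Rightarrow> zpoly set" where
  "iota m K1 K2 Z Ki v =
     SR_map m Ki (THE u. u \<in> SR_genideal m (K1 \<union> K2) Z \<and> SR_map m (K1 \<inter> K2) u = v)"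

end

theory Submission
  imports Defs
begin

text \<open>Every Stanley--Reisner ring here is a quotient of \<open>P = \<int>[x\<^sub>1,\<dots>,x\<^sub>m]\<close>, and for a
  downward closed family \<open>K\<close> its ideal is spanned by the monomials whose support is not in \<open>K\<close>.
  The map \<open>p \<mapsto> ([p]\<^sub>K\<^sub>1, [p]\<^sub>K\<^sub>2)\<close> from \<open>P\<close> onto the fibre product
  \<open>\<int>[K1] \<times>\<^bsub>\<int>[W]\<^esub> \<int>[K2]\<close> is surjective, and the relations \<open>(\<iota>\<^sub>1 v, \<iota>\<^sub>2 v)\<close> are exactly the
  images of the monomial ideal generated by the \<open>x\<^sub>\<sigma>\<close>, \<open>\<sigma> \<in> Z\<close>. A polynomial is sent into the
  relations iff each of its monomials is divisible by some \<open>x\<^sub>\<sigma>\<close>, \<open>\<sigma> \<in> Z\<close>, or is supported outside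
  \<open>K1 \<union> K2\<close>, i.e. iff it lies in the Stanley--Reisner ideal of \<open>Del\<^sub>Z(K1 \<union> K2)\<close>; the first
  isomorphism theorem concludes.\<close>

lemma carrier_Pring_iff:
  "p \<in> carrier (Pring m) \<longleftrightarrow> (\<forall>\<mu>\<in>Poly_Mapping.keys p. Poly_Mapping.keys \<mu> \<subseteq> {1..m})"
  by (simp add: Pring_def)

lemma Pring_simps [simp]:
  "mult (Pring m) = (*)" "add (Pring m) = (+)" "one (Pring m) = 1" "zero (Pring m) = 0"
  by (simp_all add: Pring_def)

lemma keys_add_exponents:
  "Poly_Mapping.keys ((\<mu>::nat \<Rightarrow>\<^sub>0 nat) + \<nu>) = Poly_Mapping.keys \<mu> \<union> Poly_Mapping.keys \<nu>"
  by (auto simp: in_keys_iff lookup_add)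

lemma Pring_add_closed:
  "p \<in> carrier (Pring m) \<Longrightarrow> q \<in> carrier (Pring m) \<Longrightarrow> p + q \<in> carrier (Pring m)"
  using keys_add[of p q] by (auto simp: carrier_Pring_iff)

lemma Pring_diff_closed:
  "p \<in> carrier (Pring m) \<Longrightarrow> q \<in> carrier (Pring m) \<Longrightarrow> p - q \<in> carrier (Pring m)"
  using keys_diff[of p q] by (auto simp: carrier_Pring_iff)

lemma Pring_mult_closed:
  "p \<in> carrier (Pring m) \<Longrightarrow> q \<in> carrier (Pring m) \<Longrightarrow> p * q \<in> carrier (Pring m)"
  using keys_mult[of p q] by (fastforce simp: carrier_Pring_iff keys_add_exponents)

lemma cring_Pring: "cring (Pring m)"
proof -
  have "0 \<in> carrier (Pring m)" "1 \<in> carrier (Pring m)"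
    by (simp_all add: carrier_Pring_iff)
  moreover have "\<exists>q\<in>carrier (Pring m). p + q = 0" if "p \<in> carrier (Pring m)" for p
    using that by (intro bexI[of _ "- p"]) (auto simp: carrier_Pring_iff)
  ultimately show ?thesis
    by unfold_locales (auto simp: Pring_add_closed Pring_mult_closed algebra_simps Units_def)
qed

interpretation PR: cring "Pring m"
  by (rule cring_Pring)

lemma Pring_a_inv: "p \<in> carrier (Pring m) \<Longrightarrow> \<ominus>\<^bsub>Pring m\<^esub> p = - p"
  by (intro PR.minus_equality) (auto simp: carrier_Pring_iff)

lemma Pring_a_minus:
  "p \<in> carrier (Pring m) \<Longrightarrow> q \<in> carrier (Pring m) \<Longrightarrow> p \<ominus>\<^bsub>Pring m\<^esub> q = p - q"
  by (simp add: a_minus_def Pring_a_inv)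

lemma ideal_PringI:
  assumes "I \<subseteq> carrier (Pring m)" "0 \<in> I"
    and diff: "\<And>a b. a \<in> I \<Longrightarrow> b \<in> I \<Longrightarrow> a - b \<in> I"
    and mult: "\<And>a x. a \<in> I \<Longrightarrow> x \<in> carrier (Pring m) \<Longrightarrow> x * a \<in> I"
  shows "ideal I (Pring m)"
proof (rule idealI[OF PR.ring_axioms])
  show "subgroup I (add_monoid (Pring m))"
  proof (rule PR.add.subgroupI)
    fix a b assume "a \<in> I" "b \<in> I"
    moreover have "a + b = a - (0 - b)"
      by simp
    ultimately show "\<ominus>\<^bsub>Pring m\<^esub> a \<in> I" "a \<oplus>\<^bsub>Pring m\<^esub> b \<in> I"
      using diff[of 0 a] diff[of 0 b] diff[of a "0 - b"] assms(1,2) Pring_a_inv[of a m] by auto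
  qed (use assms in auto)
next
  fix a x assume "a \<in> I" "x \<in> carrier (Pring m)"
  then show "x \<otimes>\<^bsub>Pring m\<^esub> a \<in> I" "a \<otimes>\<^bsub>Pring m\<^esub> x \<in> I"
    using mult by (simp_all add: mult.commute)
qed

definition sqfree_exponent :: "nat set \<Rightarrow> (nat \<Rightarrow>\<^sub>0 nat)" where
  "sqfree_exponent \<sigma> = (\<Sum>i\<in>\<sigma>. Poly_Mapping.single i 1)"

lemma lookup_sqfree_exponent:
  "finite \<sigma> \<Longrightarrow> Poly_Mapping.lookup (sqfree_exponent \<sigma>) i = (if i \<in> \<sigma> then 1 else 0)"
  unfolding sqfree_exponent_def lookup_sum by (simp add: lookup_single when_def)

lemma keys_sqfree_exponent: "finite \<sigma> \<Longrightarrow> Poly_Mapping.keys (sqfree_exponent \<sigma>) = \<sigma>"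
  by (auto simp: in_keys_iff lookup_sqfree_exponent split: if_splits)

lemma xs_eq_single: "finite \<sigma> \<Longrightarrow> xs \<sigma> = Poly_Mapping.single (sqfree_exponent \<sigma>) 1"
proof (induction \<sigma> rule: finite_induct)
  case empty
  then show ?case by (simp add: xs_def sqfree_exponent_def)
next
  case (insert i F)
  then have "xs (insert i F) = var i * xs F"
    by (simp add: xs_def)
  also have "\<dots> = Poly_Mapping.single (sqfree_exponent (insert i F)) 1"
    using insert by (simp add: var_def mult_single sqfree_exponent_def)
  finally show ?case .
qed

lemma keys_xs: "finite \<sigma> \<Longrightarrow> Poly_Mapping.keys (xs \<sigma>) = {sqfree_exponent \<sigma>}"
  by (simp add: xs_eq_single)

lemma xs_in_Pring: "\<sigma> \<subseteq> {1..m} \<Longrightarrow> xs \<sigma> \<in> carrier (Pring m)"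
  using finite_subset[of \<sigma> "{1..m}"]
  by (auto simp: carrier_Pring_iff keys_xs keys_sqfree_exponent)

lemma single_eq_mult_xs:
  assumes "finite \<sigma>" "\<sigma> \<subseteq> Poly_Mapping.keys \<mu>"
  shows "Poly_Mapping.single \<mu> (1::int) = Poly_Mapping.single (\<mu> - sqfree_exponent \<sigma>) 1 * xs \<sigma>"
proof -
  have "\<mu> - sqfree_exponent \<sigma> + sqfree_exponent \<sigma> = \<mu>"
    using assms
    by (intro poly_mapping_eqI) (auto simp: lookup_add lookup_minus lookup_sqfree_exponent in_keys_iff)
  then show ?thesis
    using assms by (simp add: xs_eq_single mult_single)
qed

section \<open>Ideals spanned by monomials\<close>

definition restrict_monomials :: "((nat \<Rightarrow>\<^sub>0 nat) \<Rightarrow> bool) \<Rightarrow> zpoly \<Rightarrow> zpoly" where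
  "restrict_monomials Q p = Abs_poly_mapping (\<lambda>\<mu>. if Q \<mu> then Poly_Mapping.lookup p \<mu> else 0)"

lemma lookup_restrict_monomials:
  "Poly_Mapping.lookup (restrict_monomials Q p) \<mu> = (if Q \<mu> then Poly_Mapping.lookup p \<mu> else 0)"
proof -
  have "finite {\<mu>. (if Q \<mu> then Poly_Mapping.lookup p \<mu> else 0) \<noteq> 0}"
    by (rule finite_subset[OF _ finite_keys[of p]]) (auto simp: in_keys_iff split: if_splits)
  then show ?thesis
    by (simp add: restrict_monomials_def lookup_Abs_poly_mapping)
qed

lemma keys_restrict_monomials:
  "Poly_Mapping.keys (restrict_monomials Q p) = {\<mu> \<in> Poly_Mapping.keys p. Q \<mu>}"
  by (auto simp: in_keys_iff lookup_restrict_monomials split: if_split_asm)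

lemma restrict_monomials_in_Pring:
  "p \<in> carrier (Pring m) \<Longrightarrow> restrict_monomials Q p \<in> carrier (Pring m)"
  by (auto simp: carrier_Pring_iff keys_restrict_monomials)

lemma diff_restrict_monomials:
  "p - restrict_monomials Q p = restrict_monomials (\<lambda>\<mu>. \<not> Q \<mu>) p"
  by (intro poly_mapping_eqI) (simp add: lookup_restrict_monomials lookup_minus)

definition monomial_ideal :: "nat \<Rightarrow> nat set set \<Rightarrow> zpoly set" where
  "monomial_ideal m G =
     {p \<in> carrier (Pring m). \<forall>\<mu>\<in>Poly_Mapping.keys p. \<exists>\<sigma>\<in>G. \<sigma> \<subseteq> Poly_Mapping.keys \<mu>}"

lemma ideal_monomial_ideal: "ideal (monomial_ideal m G) (Pring m)"
proof (rule ideal_PringI)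
  fix a x assume a: "a \<in> monomial_ideal m G" and x: "x \<in> carrier (Pring m)"
  have "\<exists>\<sigma>\<in>G. \<sigma> \<subseteq> Poly_Mapping.keys \<mu>" if \<mu>: "\<mu> \<in> Poly_Mapping.keys (x * a)" for \<mu>
  proof -
    obtain \<nu> \<rho> where "\<mu> = \<nu> + \<rho>" "\<rho> \<in> Poly_Mapping.keys a"
      using keys_mult[of x a] \<mu> by blast
    moreover obtain \<sigma> where "\<sigma> \<in> G" "\<sigma> \<subseteq> Poly_Mapping.keys \<rho>"
      using a \<open>\<rho> \<in> Poly_Mapping.keys a\<close> unfolding monomial_ideal_def by blast
    ultimately show ?thesis
      by (auto simp: keys_add_exponents)
  qed
  with a x show "x * a \<in> monomial_ideal m G"
    by (simp add: monomial_ideal_def Pring_mult_closed)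
next
  fix a b assume "a \<in> monomial_ideal m G" "b \<in> monomial_ideal m G"
  then show "a - b \<in> monomial_ideal m G"
    using keys_diff[of a b] by (auto simp: monomial_ideal_def Pring_diff_closed)
qed (auto simp: monomial_ideal_def carrier_Pring_iff)

lemma genideal_xs_eq_monomial_ideal:
  assumes G: "G \<subseteq> Pow {1..m}"
  shows "genideal (Pring m) (xs ` G) = monomial_ideal m G"
proof
  have fin: "finite \<sigma>" if "\<sigma> \<in> G" for \<sigma>
    using G that finite_subset[of \<sigma> "{1..m}"] by blast
  have gens: "xs ` G \<subseteq> monomial_ideal m G"
    using G fin xs_in_Pring[of _ m] by (auto simp: monomial_ideal_def keys_xs keys_sqfree_exponent)
  then show "genideal (Pring m) (xs ` G) \<subseteq> monomial_ideal m G"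
    by (rule PR.genideal_minimal[OF ideal_monomial_ideal])
  have "xs ` G \<subseteq> carrier (Pring m)"
    using gens by (auto simp: monomial_ideal_def)
  then interpret J: ideal "genideal (Pring m) (xs ` G)" "Pring m"
    by (rule PR.genideal_ideal)
  show "monomial_ideal m G \<subseteq> genideal (Pring m) (xs ` G)"
  proof
    fix p assume "p \<in> monomial_ideal m G"
    then have "Poly_Mapping.keys p \<subseteq>
        {\<mu>. Poly_Mapping.keys \<mu> \<subseteq> {1..m} \<and> (\<exists>\<sigma>\<in>G. \<sigma> \<subseteq> Poly_Mapping.keys \<mu>)}"
      by (auto simp: monomial_ideal_def carrier_Pring_iff)
    then show "p \<in> genideal (Pring m) (xs ` G)"
    proof (induction p rule: frag_induction)
      case (one \<mu>)
      then obtain \<sigma> where \<sigma>: "\<sigma> \<in> G" "\<sigma> \<subseteq> Poly_Mapping.keys \<mu>" "Poly_Mapping.keys \<mu> \<subseteq> {1..m}"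
        by blast
      have "Poly_Mapping.single (\<mu> - sqfree_exponent \<sigma>) (1::int) \<in> carrier (Pring m)"
        using \<sigma>(3) by (auto simp: carrier_Pring_iff in_keys_iff lookup_minus)
      moreover have "xs \<sigma> \<in> genideal (Pring m) (xs ` G)"
        using PR.genideal_self[OF \<open>xs ` G \<subseteq> carrier (Pring m)\<close>] \<sigma>(1) by blast
      ultimately show ?case
        using J.I_l_closed single_eq_mult_xs[OF fin[OF \<sigma>(1)] \<sigma>(2)] by fastforce
    next
      case (diff a b)
      then have "a \<ominus>\<^bsub>Pring m\<^esub> b \<in> genideal (Pring m) (xs ` G)"
        unfolding a_minus_def by (intro J.a_closed J.a_inv_closed)
      with diff show ?case
        using J.Icarr by (simp add: Pring_a_minus)
    next
      case zero
      show ?case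
        using J.zero_closed by simp
    qed
  qed
qed

lemma (in ring_hom_ring) surj_img_is_ideal:
  assumes surj: "h ` carrier R = carrier S" and "ideal I R"
  shows "ideal (h ` I) S"
proof (rule idealI[OF S.ring_axioms])
  interpret I: ideal I R by fact
  show "subgroup (h ` I) (add_monoid S)"
    by (rule img_is_add_subgroup[OF I.a_subgroup])
  fix a x assume "a \<in> h ` I" "x \<in> carrier S"
  then obtain a' x' where a': "a' \<in> I" "a = h a'" and x': "x' \<in> carrier R" "x = h x'"
    using surj by blast
  then have "x \<otimes>\<^bsub>S\<^esub> a = h (x' \<otimes> a')" "a \<otimes>\<^bsub>S\<^esub> x = h (a' \<otimes> x')"
    by (simp_all add: I.Icarr)
  moreover have "x' \<otimes> a' \<in> I" "a' \<otimes> x' \<in> I"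
    using a' x' by (simp_all add: I.I_l_closed I.I_r_closed)
  ultimately show "x \<otimes>\<^bsub>S\<^esub> a \<in> h ` I" "a \<otimes>\<^bsub>S\<^esub> x \<in> h ` I"
    by simp_all
qed

lemma (in ring_hom_ring) surj_genideal_image:
  assumes surj: "h ` carrier R = carrier S" and A: "A \<subseteq> carrier R"
  shows "genideal S (h ` A) = h ` genideal R A"
proof
  have "ideal (h ` genideal R A) S"
    by (rule surj_img_is_ideal[OF surj R.genideal_ideal[OF A]])
  then show "genideal S (h ` A) \<subseteq> h ` genideal R A"
    using R.genideal_self[OF A] by (intro S.genideal_minimal) auto
  have hA: "h ` A \<subseteq> carrier S"
    using A by auto
  have "ideal {r \<in> carrier R. h r \<in> genideal S (h ` A)} R"
    by (rule ideal_vimage[OF S.genideal_ideal[OF hA]])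
  then have "genideal R A \<subseteq> {r \<in> carrier R. h r \<in> genideal S (h ` A)}"
    using A S.genideal_self[OF hA] by (intro R.genideal_minimal) auto
  then show "h ` genideal R A \<subseteq> genideal S (h ` A)"
    by blast
qed

lemma (in ring_hom_ring) surj_quotient_iso:
  assumes surj: "h ` carrier R = carrier S"
  shows "\<exists>\<phi>. \<phi> \<in> ring_iso S (R Quot a_kernel R S h) \<and>
             (\<forall>p\<in>carrier R. \<phi> (h p) = a_kernel R S h +>\<^bsub>R\<^esub> p)"
proof -
  let ?\<psi> = "\<lambda>X. the_elem (h ` X)"
  have iso: "?\<psi> \<in> ring_iso (R Quot a_kernel R S h) S"
    by (rule FactRing_iso_set[OF surj])
  have "inv_into (carrier (R Quot a_kernel R S h)) ?\<psi> (h p) = a_kernel R S h +> p"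
    if "p \<in> carrier R" for p
  proof -
    have "a_kernel R S h +> p \<in> carrier (R Quot a_kernel R S h)"
      using that by (auto simp: FactRing_def A_RCOSETS_def')
    moreover have "inj_on ?\<psi> (carrier (R Quot a_kernel R S h))"
      using iso by (simp add: ring_iso_def bij_betw_def)
    ultimately show ?thesis
      using the_elem_simp[OF that] by (metis inv_into_f_f)
  qed
  moreover have "inv_into (carrier (R Quot a_kernel R S h)) ?\<psi> \<in> ring_iso S (R Quot a_kernel R S h)"
    by (rule ring_iso_set_sym[OF ideal.quotient_is_ring[OF kernel_is_ideal] iso])
  ultimately show ?thesis
    by blast
qed

definition downward_closed :: "nat set set \<Rightarrow> bool" where
  "downward_closed K \<longleftrightarrow> (\<forall>\<sigma>\<in>K. \<forall>\<tau>. \<tau> \<subseteq> \<sigma> \<longrightarrow> \<tau> \<in> K)"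

lemma downward_closed_Del: "downward_closed K \<Longrightarrow> downward_closed (Del Z K)"
  by (fastforce simp: downward_closed_def Del_def Ostar_def)

definition nonface_polys :: "nat \<Rightarrow> nat set set \<Rightarrow> zpoly set" where
  "nonface_polys m K = {p \<in> carrier (Pring m). \<forall>\<mu>\<in>Poly_Mapping.keys p. Poly_Mapping.keys \<mu> \<notin> K}"

lemma nonface_polys_antimono: "L \<subseteq> K \<Longrightarrow> nonface_polys m K \<subseteq> nonface_polys m L"
  by (auto simp: nonface_polys_def)

lemma nonface_polys_eq_monomial_ideal:
  "downward_closed K \<Longrightarrow> nonface_polys m K = monomial_ideal m {\<sigma>. \<sigma> \<subseteq> {1..m} \<and> \<sigma> \<notin> K}"
  unfolding nonface_polys_def monomial_ideal_def downward_closed_def carrier_Pring_iff by blast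

lemma SR_ideal_eq_nonface_polys:
  assumes "downward_closed K"
  shows "SR_ideal m K = nonface_polys m K"
proof -
  have "{xs \<sigma> | \<sigma>. \<sigma> \<subseteq> {1..m} \<and> \<sigma> \<notin> K} = xs ` {\<sigma>. \<sigma> \<subseteq> {1..m} \<and> \<sigma> \<notin> K}"
    by blast
  then show ?thesis
    unfolding SR_ideal_def nonface_polys_eq_monomial_ideal[OF assms]
    by (simp add: genideal_xs_eq_monomial_ideal subset_eq)
qed

lemma ideal_nonface_polys: "downward_closed K \<Longrightarrow> ideal (nonface_polys m K) (Pring m)"
  by (simp add: nonface_polys_eq_monomial_ideal ideal_monomial_ideal)

lemma carrier_SR: "carrier (SR m K) = SR_proj m K ` carrier (Pring m)"
  by (auto simp: SR_def SR_proj_def FactRing_def A_RCOSETS_def')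

lemma SR_proj_hom: "downward_closed K \<Longrightarrow> SR_proj m K \<in> ring_hom (Pring m) (SR m K)"
  using ideal.rcos_ring_hom[OF ideal_nonface_polys]
  by (simp add: SR_def SR_proj_def[abs_def] SR_ideal_eq_nonface_polys)

lemma cring_SR: "downward_closed K \<Longrightarrow> cring (SR m K)"
  by (simp add: SR_def SR_ideal_eq_nonface_polys ideal.quotient_is_cring ideal_nonface_polys cring_Pring)

lemma SR_proj_eq_iff:
  assumes "downward_closed K" "p \<in> carrier (Pring m)" "q \<in> carrier (Pring m)"
  shows "SR_proj m K p = SR_proj m K q \<longleftrightarrow> p - q \<in> nonface_polys m K"
  using PR.quotient_eq_iff_same_a_r_cos[OF ideal_nonface_polys[OF assms(1)] assms(2,3)] assms
  by (simp add: SR_proj_def SR_ideal_eq_nonface_polys Pring_a_minus)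

lemma SR_map_SR_proj:
  assumes K: "downward_closed K" and L: "downward_closed L" "L \<subseteq> K"
    and p: "p \<in> carrier (Pring m)"
  shows "SR_map m L (SR_proj m K p) = SR_proj m L p"
proof -
  interpret I: ideal "nonface_polys m K" "Pring m"
    by (rule ideal_nonface_polys[OF K])
  have proj: "SR_proj m K x = nonface_polys m K +>\<^bsub>Pring m\<^esub> x" for x
    using K by (simp add: SR_proj_def SR_ideal_eq_nonface_polys)
  let ?q = "SOME q. q \<in> SR_proj m K p"
  have q: "?q \<in> nonface_polys m K +>\<^bsub>Pring m\<^esub> p"
    unfolding proj[symmetric] using I.a_rcos_self[OF p] unfolding proj by (rule someI)
  have q_carrier: "?q \<in> carrier (Pring m)"
    by (rule I.a_elemrcos_carrier[OF p q])
  have "SR_proj m K ?q = SR_proj m K p"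
    using I.a_repr_independence'[OF q p] by (simp add: proj)
  then have "?q - p \<in> nonface_polys m L"
    using SR_proj_eq_iff[OF K q_carrier p] nonface_polys_antimono[OF L(2)] by blast
  then show ?thesis
    unfolding SR_map_def using SR_proj_eq_iff[OF L(1) q_carrier p] by simp
qed

lemma SR_genideal_eq_image:
  assumes K: "downward_closed K" and Z: "Z \<subseteq> Pow {1..m}"
  shows "SR_genideal m K Z = SR_proj m K ` monomial_ideal m Z"
proof -
  interpret SR_proj: ring_hom_ring "Pring m" "SR m K" "SR_proj m K"
    by (intro ring_hom_ringI2 PR.ring_axioms cring.axioms(1) cring_SR SR_proj_hom K)
  have "{SR_proj m K (xs \<sigma>) | \<sigma>. \<sigma> \<in> Z} = SR_proj m K ` xs ` Z"
    by blast
  moreover have "xs ` Z \<subseteq> carrier (Pring m)"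
    using Z xs_in_Pring by blast
  ultimately show ?thesis
    unfolding SR_genideal_def genideal_xs_eq_monomial_ideal[OF Z, symmetric]
    by (simp add: SR_proj.surj_genideal_image carrier_SR)
qed

section \<open>The connected sum\<close>

locale SR_connected_sum =
  fixes m :: nat and K1 K2 Z :: "nat set set"
  assumes downward_closed_K1: "downward_closed K1"
    and downward_closed_K2: "downward_closed K2"
    and Z_subsets: "Z \<subseteq> Pow {1..m}"
    and Ostar_subset_Int: "Ostar (K1 \<union> K2) Z \<subseteq> K1 \<inter> K2"
begin

abbreviation W :: "nat set set" where "W \<equiv> K1 \<inter> K2"
abbreviation K :: "nat set set" where "K \<equiv> K1 \<union> K2"

abbreviation diag :: "zpoly \<Rightarrow> zpoly set \<times> zpoly set" where
  "diag p \<equiv> (SR_proj m K1 p, SR_proj m K2 p)"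

abbreviation fiber :: "(zpoly set \<times> zpoly set) ring" where
  "fiber \<equiv> fiber_prod (SR m K1) (SR m K2) (SR_map m W) (SR_map m W)"

abbreviation rels :: "(zpoly set \<times> zpoly set) set" where
  "rels \<equiv> csum_rel (SR_genideal m W Z) (iota m K1 K2 Z K1) (iota m K1 K2 Z K2)"

lemma downward_closed_W: "downward_closed W"
  using downward_closed_K1 downward_closed_K2 by (auto simp: downward_closed_def)

lemma downward_closed_K: "downward_closed K"
  using downward_closed_K1 downward_closed_K2 by (auto simp: downward_closed_def)

text \<open>This is where \<open>O(Z) \<subseteq> W\<close> enters: it makes \<open>\<I>\<^sub>Z \<rightarrow> \<J>\<^sub>Z\<close> injective, so \<open>iota\<close> is well defined.\<close>

lemma SR_proj_K_eq_if_SR_proj_W_eq: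
  assumes p: "p \<in> monomial_ideal m Z" and q: "q \<in> monomial_ideal m Z"
    and eq: "SR_proj m W p = SR_proj m W q"
  shows "SR_proj m K p = SR_proj m K q"
proof -
  have carrier: "p \<in> carrier (Pring m)" "q \<in> carrier (Pring m)"
    using p q by (auto simp: monomial_ideal_def)
  have W: "p - q \<in> nonface_polys m W"
    using SR_proj_eq_iff[OF downward_closed_W carrier] eq by simp
  have "Poly_Mapping.keys \<mu> \<notin> K" if \<mu>: "\<mu> \<in> Poly_Mapping.keys (p - q)" for \<mu>
  proof -
    have "\<mu> \<in> Poly_Mapping.keys p \<or> \<mu> \<in> Poly_Mapping.keys q"
      using \<mu> keys_diff[of p q] by blast
    then obtain \<tau> where "\<tau> \<in> Z" "\<tau> \<subseteq> Poly_Mapping.keys \<mu>"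
      using p q by (auto simp: monomial_ideal_def)
    moreover have "Poly_Mapping.keys \<mu> \<notin> W"
      using W \<mu> by (auto simp: nonface_polys_def)
    ultimately show ?thesis
      using Ostar_subset_Int by (auto simp: Ostar_def)
  qed
  then have "p - q \<in> nonface_polys m K"
    using W by (simp add: nonface_polys_def)
  then show ?thesis
    using SR_proj_eq_iff[OF downward_closed_K carrier] by simp
qed

lemma iota_SR_proj:
  assumes p: "p \<in> monomial_ideal m Z" and Ki: "Ki \<subseteq> K" "downward_closed Ki"
  shows "iota m K1 K2 Z Ki (SR_proj m W p) = SR_proj m Ki p"
proof -
  have I_Z: "SR_genideal m K Z = SR_proj m K ` monomial_ideal m Z"
    by (rule SR_genideal_eq_image[OF downward_closed_K Z_subsets])
  have W_of_K: "SR_map m W (SR_proj m K q) = SR_proj m W q" if "q \<in> monomial_ideal m Z" for q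
    using that SR_map_SR_proj[OF downward_closed_K downward_closed_W]
    by (auto simp: monomial_ideal_def)
  have "(THE u. u \<in> SR_genideal m K Z \<and> SR_map m W u = SR_proj m W p) = SR_proj m K p"
  proof (rule the_equality)
    show "SR_proj m K p \<in> SR_genideal m K Z \<and> SR_map m W (SR_proj m K p) = SR_proj m W p"
      using I_Z p W_of_K by blast
  next
    fix u assume "u \<in> SR_genideal m K Z \<and> SR_map m W u = SR_proj m W p"
    then obtain q where "q \<in> monomial_ideal m Z" "u = SR_proj m K q" "SR_proj m W q = SR_proj m W p"
      using I_Z W_of_K by auto
    then show "u = SR_proj m K p"
      using SR_proj_K_eq_if_SR_proj_W_eq[OF _ p] by simp
  qed
  then show ?thesis
    using SR_map_SR_proj[OF downward_closed_K Ki(2,1)] p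
    by (simp add: iota_def monomial_ideal_def)
qed

lemma diag_in_fiber: "p \<in> carrier (Pring m) \<Longrightarrow> diag p \<in> carrier fiber"
  using ring_hom_closed[OF SR_proj_hom[OF downward_closed_K1]]
    ring_hom_closed[OF SR_proj_hom[OF downward_closed_K2]]
    SR_map_SR_proj[OF downward_closed_K1 downward_closed_W, of p m]
    SR_map_SR_proj[OF downward_closed_K2 downward_closed_W, of p m]
  by (simp add: fiber_prod_def)

lemma diag_hom: "diag \<in> ring_hom (Pring m) fiber"
  using ring_hom_mult[OF SR_proj_hom[OF downward_closed_K1]] ring_hom_mult[OF SR_proj_hom[OF downward_closed_K2]]
    ring_hom_add[OF SR_proj_hom[OF downward_closed_K1]] ring_hom_add[OF SR_proj_hom[OF downward_closed_K2]]
    ring_hom_one[OF SR_proj_hom[OF downward_closed_K1]] ring_hom_one[OF SR_proj_hom[OF downward_closed_K2]]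
  by (intro ring_hom_memI diag_in_fiber) (simp_all add: fiber_prod_def)

text \<open>Given \<open>a, b\<close> agreeing in \<open>\<int>[W]\<close>, the polynomial \<open>a + r\<close>, where \<open>r\<close> consists of the
  monomials of \<open>b - a\<close> supported outside \<open>K1\<close>, represents \<open>a\<close> in \<open>\<int>[K1]\<close> and \<open>b\<close> in \<open>\<int>[K2]\<close>.\<close>

lemma diag_surj: "diag ` carrier (Pring m) = carrier fiber"
proof
  show "diag ` carrier (Pring m) \<subseteq> carrier fiber"
    using diag_in_fiber by blast
  show "carrier fiber \<subseteq> diag ` carrier (Pring m)"
  proof
    fix x assume "x \<in> carrier fiber"
    then obtain A B where x: "x = (A, B)" "A \<in> carrier (SR m K1)" "B \<in> carrier (SR m K2)"
      "SR_map m W A = SR_map m W B"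
      by (auto simp: fiber_prod_def)
    obtain a b where a: "a \<in> carrier (Pring m)" "A = SR_proj m K1 a"
      and b: "b \<in> carrier (Pring m)" "B = SR_proj m K2 b"
      using x(2,3) by (auto simp: carrier_SR)
    have "SR_proj m W a = SR_proj m W b"
      using x(4) a b SR_map_SR_proj[OF downward_closed_K1 downward_closed_W]
        SR_map_SR_proj[OF downward_closed_K2 downward_closed_W] by auto
    then have ab: "a - b \<in> nonface_polys m W"
      using SR_proj_eq_iff[OF downward_closed_W a(1) b(1)] by simp
    define r where "r = restrict_monomials (\<lambda>\<mu>. Poly_Mapping.keys \<mu> \<notin> K1) (b - a)"
    define p where "p = a + r"
    have r_carrier: "r \<in> carrier (Pring m)"
      unfolding r_def using a b by (intro restrict_monomials_in_Pring Pring_diff_closed)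
    then have p_carrier: "p \<in> carrier (Pring m)"
      unfolding p_def using a by (intro Pring_add_closed)
    have "p - a \<in> nonface_polys m K1"
      using r_carrier by (simp add: p_def nonface_polys_def r_def keys_restrict_monomials)
    then have "SR_proj m K1 p = A"
      using SR_proj_eq_iff[OF downward_closed_K1 p_carrier a(1)] a by simp
    moreover have "p - b = restrict_monomials (\<lambda>\<mu>. Poly_Mapping.keys \<mu> \<in> K1) (a - b)"
      by (intro poly_mapping_eqI)
        (simp add: p_def r_def lookup_restrict_monomials lookup_add lookup_minus)
    then have "p - b \<in> nonface_polys m K2"
      using ab Pring_diff_closed[OF p_carrier b(1)]
      by (auto simp: nonface_polys_def keys_restrict_monomials)
    then have "SR_proj m K2 p = B"
      using SR_proj_eq_iff[OF downward_closed_K2 p_carrier b(1)] b by simp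
    ultimately show "x \<in> diag ` carrier (Pring m)"
      using p_carrier x(1) by blast
  qed
qed

lemma ring_fiber: "ring fiber"
proof -
  have "ring (fiber\<lparr>carrier := diag ` carrier (Pring m), zero := diag \<zero>\<^bsub>Pring m\<^esub>\<rparr>)"
    by (rule PR.ring_hom_imp_img_ring[OF diag_hom])
  moreover have "diag \<zero>\<^bsub>Pring m\<^esub> = \<zero>\<^bsub>fiber\<^esub>"
    using ring_hom_zero[OF SR_proj_hom PR.ring_axioms cring.axioms(1)[OF cring_SR]]
      downward_closed_K1 downward_closed_K2
    by (simp add: fiber_prod_def)
  ultimately show ?thesis
    by (simp add: diag_surj fiber_prod_def)
qed

lemma rels_eq_image: "rels = diag ` monomial_ideal m Z"
proof -
  have J_Z: "SR_genideal m W Z = SR_proj m W ` monomial_ideal m Z"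
    by (rule SR_genideal_eq_image[OF downward_closed_W Z_subsets])
  have iota_pair: "(iota m K1 K2 Z K1 (SR_proj m W p), iota m K1 K2 Z K2 (SR_proj m W p)) = diag p"
    if "p \<in> monomial_ideal m Z" for p
    using that downward_closed_K1 downward_closed_K2 by (simp add: iota_SR_proj)
  have "rels = (\<lambda>p. (iota m K1 K2 Z K1 (SR_proj m W p), iota m K1 K2 Z K2 (SR_proj m W p)))
      ` monomial_ideal m Z"
    unfolding csum_rel_def J_Z by blast
  also have "\<dots> = diag ` monomial_ideal m Z"
    using iota_pair by (intro image_cong) simp_all
  finally show ?thesis .
qed

lemma ideal_rels: "ideal rels fiber"
  unfolding rels_eq_image
  by (rule ring_hom_ring.surj_img_is_ideal[OF ring_hom_ringI2[OF PR.ring_axioms ring_fiber diag_hom]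
        diag_surj ideal_monomial_ideal])

lemma diag_in_rels_iff:
  assumes p: "p \<in> carrier (Pring m)"
  shows "diag p \<in> rels \<longleftrightarrow> p \<in> nonface_polys m (Del Z K)"
proof
  assume "diag p \<in> rels"
  then obtain q where q: "q \<in> monomial_ideal m Z" "diag p = diag q"
    unfolding rels_eq_image by auto
  have q_carrier: "q \<in> carrier (Pring m)"
    using q by (auto simp: monomial_ideal_def)
  have "p - q \<in> nonface_polys m K1" "p - q \<in> nonface_polys m K2"
    using q SR_proj_eq_iff[OF downward_closed_K1 p q_carrier]
      SR_proj_eq_iff[OF downward_closed_K2 p q_carrier] by simp_all
  then have "Poly_Mapping.keys \<mu> \<notin> K" if "\<mu> \<in> Poly_Mapping.keys p" "\<mu> \<notin> Poly_Mapping.keys q" for \<mu>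
    using that by (auto simp: nonface_polys_def in_keys_iff lookup_minus)
  with q(1) p show "p \<in> nonface_polys m (Del Z K)"
    by (fastforce simp: nonface_polys_def monomial_ideal_def Del_def Ostar_def)
next
  assume p_Del: "p \<in> nonface_polys m (Del Z K)"
  define q where "q = restrict_monomials (\<lambda>\<mu>. \<exists>\<tau>\<in>Z. \<tau> \<subseteq> Poly_Mapping.keys \<mu>) p"
  have q_carrier: "q \<in> carrier (Pring m)"
    unfolding q_def by (rule restrict_monomials_in_Pring[OF p])
  then have q: "q \<in> monomial_ideal m Z"
    by (auto simp: monomial_ideal_def q_def keys_restrict_monomials)
  have "p - q \<in> nonface_polys m K"
    using p_Del Pring_diff_closed[OF p q_carrier]
    by (auto simp: q_def diff_restrict_monomials keys_restrict_monomials nonface_polys_def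
        Del_def Ostar_def)
  then have "diag p = diag q"
    using nonface_polys_antimono[of K1 K m] nonface_polys_antimono[of K2 K m]
      SR_proj_eq_iff[OF downward_closed_K1 p q_carrier] SR_proj_eq_iff[OF downward_closed_K2 p q_carrier]
    by auto
  then show "diag p \<in> rels"
    unfolding rels_eq_image using q by blast
qed

lemma conn_sum_iso:
  "\<exists>\<phi>. \<phi> \<in> ring_iso (fiber Quot rels) (SR m (Del Z K)) \<and>
       (\<forall>p\<in>carrier (Pring m). \<phi> (rels +>\<^bsub>fiber\<^esub> diag p) = SR_proj m (Del Z K) p)"
proof -
  interpret rels: ideal rels fiber
    by (rule ideal_rels)
  let ?h = "\<lambda>p. rels +>\<^bsub>fiber\<^esub> diag p"
  have "?h \<in> ring_hom (Pring m) (fiber Quot rels)"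
    using ring_hom_trans[OF diag_hom rels.rcos_ring_hom] by (simp add: comp_def)
  then interpret h: ring_hom_ring "Pring m" "fiber Quot rels" ?h
    by (intro ring_hom_ringI2 PR.ring_axioms rels.quotient_is_ring)
  have surj: "?h ` carrier (Pring m) = carrier (fiber Quot rels)"
    by (auto simp: FactRing_def A_RCOSETS_def' diag_surj[symmetric])
  have kernel_iff: "?h p = rels \<longleftrightarrow> p \<in> nonface_polys m (Del Z K)" if p: "p \<in> carrier (Pring m)" for p
  proof -
    have "?h p = rels \<longleftrightarrow> diag p \<in> rels"
      using rels.a_rcos_self[OF diag_in_fiber[OF p]] rels.a_rcos_const[of "diag p"] by auto
    then show ?thesis
      using diag_in_rels_iff[OF p] by simp
  qed
  have "\<zero>\<^bsub>fiber Quot rels\<^esub> = rels"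
    unfolding FactRing_def by simp
  then have "a_kernel (Pring m) (fiber Quot rels) ?h = {p \<in> carrier (Pring m). ?h p = rels}"
    unfolding a_kernel_def' by simp
  also have "\<dots> = nonface_polys m (Del Z K)"
    using kernel_iff by (auto simp: nonface_polys_def)
  also have "\<dots> = SR_ideal m (Del Z K)"
    by (simp add: SR_ideal_eq_nonface_polys downward_closed_Del downward_closed_K)
  finally have "a_kernel (Pring m) (fiber Quot rels) ?h = SR_ideal m (Del Z K)" .
  then show ?thesis
    using h.surj_quotient_iso[OF surj] by (simp add: SR_def SR_proj_def)
qed

end

theorem theorem4p4:
  fixes m :: nat and K1 K2 Z :: "nat set set"
  assumes "simplicial_complex m K1" and "simplicial_complex m K2"
    and "Z \<subseteq> K1 \<inter> K2" and "{} \<notin> Z"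
    and "Ostar (K1 \<union> K2) Z \<subseteq> K1 \<inter> K2"
  shows "\<exists>\<phi>. \<phi> \<in> ring_iso
            (conn_sum (SR m K1) (SR m K2) (SR_map m (K1 \<inter> K2)) (SR_map m (K1 \<inter> K2))
               (SR_genideal m (K1 \<inter> K2) Z) (iota m K1 K2 Z K1) (iota m K1 K2 Z K2))
            (SR m (Del Z (K1 \<union> K2)))
          \<and> (\<forall>p\<in>carrier (Pring m).
               \<phi> (conn_sum_class (SR m K1) (SR m K2) (SR_map m (K1 \<inter> K2)) (SR_map m (K1 \<inter> K2))
                    (SR_genideal m (K1 \<inter> K2) Z) (iota m K1 K2 Z K1) (iota m K1 K2 Z K2)
                    (SR_proj m K1 p, SR_proj m K2 p))
               = SR_proj m (Del Z (K1 \<union> K2)) p)"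
proof -
  interpret SR_connected_sum m K1 K2 Z
    using assms(1-3,5) by unfold_locales (auto simp: simplicial_complex_def downward_closed_def)
  show ?thesis
    using conn_sum_iso unfolding conn_sum_def conn_sum_class_def .
qed

end
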